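(* $r^{(1)}=\frac nN$. Moreover, an $(N,n)$ dual pair $(F,G)$ for $\mathcal H$ belongs to $\mathcal R^{(1)}$ if and only if it is $1$-uniform, i.e. $\langle f_i,g_i\rangle=\frac nN$ for all $i$.
   Context: $\mathcal H$ is a complex Hilbert space of finite dimension $n$, inner product linear in the first argument, $N\ge n$. A finite sequence $F=\{f_i\}_{i=1}^N$ is a frame if there are $0<A\le B$ with $A\|f\|^2\le\sum_i|\langle f,f_i\rangle|^2\le B\|f\|^2$ for all $f$. $G=\{g_i\}_{i=1}^N$ is a dual of $F$ if $f=\sum_i\langle f,g_i\rangle f_i$ for all $f$; $(F,G)$ is then an $(N,n)$ dual pair. A dual pair is $1$-uniform if $\langle f_i,g_i\rangle$ is independent of $i$. $E_{\Lambda,F,G}f=\sum_{i\in\Lambda}\langle f,f_i\rangle g_i$ for $\Lambda\subseteq\{1,\dots,N\}$; $\rho$ is spectral radius; $r^{(1)}_{F,G}=\max_{1\le i\le N}\rho(E_{\{i\},F,G})$; $r^{(1)}=\inf\{r^{(1)}_{F,G}:(F,G)\text{ an }(N,n)\text{ dual pair for }\mathcal H\}$; $\mathcal R^{(1)}=\{(F,G):r^{(1)}_{F,G}=r^{(1)}\}$. *)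

theory Defs
  imports "Jordan_Normal_Form.Spectral_Radius"
begin

text \<open>The n-dimensional complex Hilbert space is modelled as carrier_vec n (complex n-vectors)
  with inner product x \<bullet>c y = sum of x_j * cnj (y_j), linear in the first argument.
  Finite sequences are functions nat to vectors indexed by 1..N.\<close>

definition hnorm_sq :: "nat \<Rightarrow> complex vec \<Rightarrow> real" where
  "hnorm_sq n f = (\<Sum>j<n. (cmod (f $ j))^2)"

definition is_frame :: "nat \<Rightarrow> nat \<Rightarrow> (nat \<Rightarrow> complex vec) \<Rightarrow> bool" where
  "is_frame n N F \<longleftrightarrow> (\<forall>i\<in>{1..N}. F i \<in> carrier_vec n) \<and>
     (\<exists>A B. 0 < A \<and> A \<le> B \<and> (\<forall>f\<in>carrier_vec n.
        A * hnorm_sq n f \<le> (\<Sum>i\<in>{1..N}. (cmod (f \<bullet>c F i))^2) \<and>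
        (\<Sum>i\<in>{1..N}. (cmod (f \<bullet>c F i))^2) \<le> B * hnorm_sq n f))"

definition is_dual :: "nat \<Rightarrow> nat \<Rightarrow> (nat \<Rightarrow> complex vec) \<Rightarrow> (nat \<Rightarrow> complex vec) \<Rightarrow> bool" where
  "is_dual n N F G \<longleftrightarrow> (\<forall>i\<in>{1..N}. G i \<in> carrier_vec n) \<and>
     (\<forall>f\<in>carrier_vec n. \<forall>j<n. f $ j = (\<Sum>i\<in>{1..N}. (f \<bullet>c G i) * (F i $ j)))"

definition dual_pair :: "nat \<Rightarrow> nat \<Rightarrow> (nat \<Rightarrow> complex vec) \<Rightarrow> (nat \<Rightarrow> complex vec) \<Rightarrow> bool" where
  "dual_pair n N F G \<longleftrightarrow> is_frame n N F \<and> is_frame n N G \<and> is_dual n N F G"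

text \<open>Matrix of the operator E_{Lambda,F,G} f = sum_{i in Lambda} <f,f_i> g_i.\<close>
definition E_op :: "nat \<Rightarrow> nat set \<Rightarrow> (nat \<Rightarrow> complex vec) \<Rightarrow> (nat \<Rightarrow> complex vec) \<Rightarrow> complex mat" where
  "E_op n \<Lambda> F G = mat n n (\<lambda>(r, c). \<Sum>i\<in>\<Lambda>. G i $ r * cnj (F i $ c))"

definition r1 :: "nat \<Rightarrow> nat \<Rightarrow> (nat \<Rightarrow> complex vec) \<Rightarrow> (nat \<Rightarrow> complex vec) \<Rightarrow> real" where
  "r1 n N F G = Max ((\<lambda>i. spectral_radius (E_op n {i} F G)) ` {1..N})"

definition r1_opt :: "nat \<Rightarrow> nat \<Rightarrow> real" where
  "r1_opt n N = Inf {r1 n N F G | F G. dual_pair n N F G}"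

definition R1 :: "nat \<Rightarrow> nat \<Rightarrow> ((nat \<Rightarrow> complex vec) \<times> (nat \<Rightarrow> complex vec)) set" where
  "R1 n N = {(F, G). dual_pair n N F G \<and> r1 n N F G = r1_opt n N}"

definition uniform1 :: "nat \<Rightarrow> (nat \<Rightarrow> complex vec) \<Rightarrow> (nat \<Rightarrow> complex vec) \<Rightarrow> bool" where
  "uniform1 N F G \<longleftrightarrow> (\<forall>i\<in>{1..N}. \<forall>j\<in>{1..N}. F i \<bullet>c G i = F j \<bullet>c G j)"

end

theory Submission
  imports Defs
begin

text \<open>The operator \<open>E\<^sub>{\<^sub>i\<^sub>}\<close> is the rank-one map \<open>f \<mapsto> \<langle>f,f\<^sub>i\<rangle> g\<^sub>i\<close>, whose only possible nonzero
  eigenvalue is \<open>\<langle>g\<^sub>i,f\<^sub>i\<rangle>\<close>; hence \<open>r1 = max\<^sub>i |\<langle>f\<^sub>i,g\<^sub>i\<rangle>|\<close>. Duality says that \<open>\<Sum>\<^sub>i f\<^sub>i g\<^sub>i\<^sup>*\<close> is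
  the identity, so taking traces gives \<open>\<Sum>\<^sub>i \<langle>f\<^sub>i,g\<^sub>i\<rangle> = n\<close>. Therefore the maximum is at least
  \<open>n/N\<close>, and it equals \<open>n/N\<close> only if every \<open>\<langle>f\<^sub>i,g\<^sub>i\<rangle>\<close> is the real number \<open>n/N\<close>. The bound is
  attained by the harmonic frame (the rows of the first \<open>n\<close> columns of the \<open>N \<times> N\<close> Fourier
  matrix) together with its canonical dual.\<close>

lemma cscalar_prod_eq_sum:
  "w \<in> carrier_vec n \<Longrightarrow> v \<bullet>c w = (\<Sum>j<n. v $ j * cnj (w $ j))"
  by (auto simp: scalar_prod_def atLeast0LessThan)

lemma cscalar_prod_commute_cnj:
  "v \<in> carrier_vec n \<Longrightarrow> w \<in> carrier_vec n \<Longrightarrow> w \<bullet>c v = cnj (v \<bullet>c w)"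
  by (simp add: cscalar_prod_eq_sum mult.commute)

lemma cscalar_prod_smult_right:
  "w \<in> carrier_vec n \<Longrightarrow> v \<bullet>c (c \<cdot>\<^sub>v w) = cnj c * (v \<bullet>c w)"
  by (simp add: cscalar_prod_eq_sum sum_distrib_left mult_ac)

lemma hnorm_sq_eq_sum:
  "complex_of_real (hnorm_sq n f) = (\<Sum>j<n. f $ j * cnj (f $ j))"
  unfolding hnorm_sq_def of_real_sum complex_norm_square ..

definition rank_one_mat :: "nat \<Rightarrow> complex vec \<Rightarrow> complex vec \<Rightarrow> complex mat" where
  "rank_one_mat n g f = mat n n (\<lambda>(r, c). g $ r * cnj (f $ c))"

lemma rank_one_mat_carrier [simp]: "rank_one_mat n g f \<in> carrier_mat n n"
  by (simp add: rank_one_mat_def)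

lemma rank_one_mat_mult_vec:
  assumes "f \<in> carrier_vec n" "g \<in> carrier_vec n" "v \<in> carrier_vec n"
  shows "rank_one_mat n g f *\<^sub>v v = (v \<bullet>c f) \<cdot>\<^sub>v g"
proof (rule eq_vecI)
  fix r assume "r < dim_vec ((v \<bullet>c f) \<cdot>\<^sub>v g)"
  with assms show "(rank_one_mat n g f *\<^sub>v v) $ r = ((v \<bullet>c f) \<cdot>\<^sub>v g) $ r"
    by (simp add: rank_one_mat_def cscalar_prod_eq_sum scalar_prod_def atLeast0LessThan
        sum_distrib_left sum_distrib_right mult_ac)
qed (use assms in \<open>simp add: rank_one_mat_def\<close>)

lemma eigenvalue_rank_one_mat:
  assumes f: "f \<in> carrier_vec n" and g: "g \<in> carrier_vec n"
    and k: "eigenvalue (rank_one_mat n g f) k"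
  shows "k = 0 \<or> k = g \<bullet>c f"
proof -
  obtain v where v: "v \<in> carrier_vec n" "v \<noteq> 0\<^sub>v n"
    and eig: "(v \<bullet>c f) \<cdot>\<^sub>v g = k \<cdot>\<^sub>v v"
    using k rank_one_mat_mult_vec[OF f g] unfolding eigenvalue_def eigenvector_def
    by (auto simp: rank_one_mat_def)
  have "(v \<bullet>c f) * (g \<bullet>c f) = k * (v \<bullet>c f)"
    using arg_cong[OF eig, of "\<lambda>x. x \<bullet>c f"] f g v by simp
  moreover have "k = 0" if "v \<bullet>c f = 0"
  proof -
    obtain r where r: "r < n" "v $ r \<noteq> 0"
      using v by (metis carrier_vecD eq_vecI index_zero_vec)
    have "0 = k * v $ r"
      using arg_cong[OF eig, of "\<lambda>x. x $ r"] that r g v by simp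
    with r show ?thesis by simp
  qed
  ultimately show ?thesis by (metis mult.commute mult_cancel_left)
qed

lemma eigenvalue_rank_one_mat_self:
  assumes f: "f \<in> carrier_vec n" and g: "g \<in> carrier_vec n" and gf: "g \<bullet>c f \<noteq> 0"
  shows "eigenvalue (rank_one_mat n g f) (g \<bullet>c f)"
proof -
  have "g \<noteq> 0\<^sub>v n" using gf f by auto
  then show ?thesis
    using rank_one_mat_mult_vec[OF f g g] g unfolding eigenvalue_def eigenvector_def
    by (auto simp: rank_one_mat_def)
qed

lemma spectral_radius_rank_one_mat:
  assumes f: "f \<in> carrier_vec n" and g: "g \<in> carrier_vec n" and n: "0 < n"
  shows "spectral_radius (rank_one_mat n g f) = cmod (g \<bullet>c f)"
proof -
  let ?A = "rank_one_mat n g f"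
  have "spectral_radius ?A \<in> norm ` spectrum ?A"
    using spectral_radius_mem_max(1)[OF rank_one_mat_carrier n] .
  then have "spectral_radius ?A \<in> {0, cmod (g \<bullet>c f)}"
    unfolding spectrum_def by (force dest: eigenvalue_rank_one_mat[OF f g])
  moreover have "cmod (g \<bullet>c f) \<le> spectral_radius ?A" if "g \<bullet>c f \<noteq> 0"
    using spectral_radius_mem_max(2)[OF rank_one_mat_carrier n]
      eigenvalue_rank_one_mat_self[OF f g that] unfolding spectrum_def by auto
  ultimately show ?thesis by (cases "g \<bullet>c f = 0") auto
qed

lemma E_op_singleton: "E_op n {i} F G = rank_one_mat n (G i) (F i)"
  by (simp add: E_op_def rank_one_mat_def)

lemma dual_pair_carrier:
  assumes "dual_pair n N F G" "i \<in> {1..N}"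
  shows "F i \<in> carrier_vec n" "G i \<in> carrier_vec n"
  using assms unfolding dual_pair_def is_dual_def is_frame_def by blast+

lemma r1_eq_Max_cmod:
  assumes dp: "dual_pair n N F G" and n: "0 < n"
  shows "r1 n N F G = Max ((\<lambda>i. cmod (F i \<bullet>c G i)) ` {1..N})"
proof -
  have "spectral_radius (E_op n {i} F G) = cmod (F i \<bullet>c G i)" if i: "i \<in> {1..N}" for i
  proof -
    note Fi = dual_pair_carrier(1)[OF dp i] and Gi = dual_pair_carrier(2)[OF dp i]
    have "spectral_radius (E_op n {i} F G) = cmod (G i \<bullet>c F i)"
      unfolding E_op_singleton by (rule spectral_radius_rank_one_mat[OF Fi Gi n])
    also have "\<dots> = cmod (F i \<bullet>c G i)"
      unfolding cscalar_prod_commute_cnj[OF Fi Gi] by (rule complex_mod_cnj)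
    finally show ?thesis .
  qed
  then show ?thesis
    unfolding r1_def by (intro arg_cong[where f = Max] image_cong refl)
qed

lemma is_dual_trace:
  assumes "is_dual n N F G"
  shows "(\<Sum>i\<in>{1..N}. F i \<bullet>c G i) = of_nat n"
proof -
  have G: "G i \<in> carrier_vec n" if "i \<in> {1..N}" for i
    using assms that unfolding is_dual_def by blast
  have dimG: "dim_vec (G i) = n" if "i \<in> {1..N}" for i
    using G[OF that] by (rule carrier_vecD)
  have diag_sum: "(\<Sum>i\<in>{1..N}. F i $ k * cnj (G i $ k)) = 1" if k: "k < n" for k
  proof -
    have "(\<Sum>i\<in>{1..N}. F i $ k * cnj (G i $ k))
        = (\<Sum>i\<in>{1..N}. (unit_vec n k \<bullet>c G i) * F i $ k)"
      using k by (intro sum.cong) (auto simp: mult.commute G dimG)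
    also have "\<dots> = unit_vec n k $ k"
      using assms k unfolding is_dual_def by simp
    finally show ?thesis using k by simp
  qed
  have "(\<Sum>i\<in>{1..N}. F i \<bullet>c G i) = (\<Sum>i\<in>{1..N}. \<Sum>k<n. F i $ k * cnj (G i $ k))"
    using G by (intro sum.cong) (simp_all add: cscalar_prod_eq_sum)
  also have "\<dots> = (\<Sum>k<n. \<Sum>i\<in>{1..N}. F i $ k * cnj (G i $ k))"
    by (rule sum.swap)
  finally show ?thesis using diag_sum by simp
qed

lemma dual_pair_trace:
  "dual_pair n N F G \<Longrightarrow> (\<Sum>i\<in>{1..N}. F i \<bullet>c G i) = of_nat n"
  unfolding dual_pair_def using is_dual_trace by blast

lemma sum_eq_card_mult_bound_imp_eq:
  fixes z :: "'a \<Rightarrow> complex"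
  assumes A: "finite A" and bound: "\<And>i. i \<in> A \<Longrightarrow> cmod (z i) \<le> c"
    and sum: "(\<Sum>i\<in>A. z i) = of_real (real (card A) * c)"
  shows "\<forall>i\<in>A. z i = of_real c"
proof
  fix i assume i: "i \<in> A"
  have Re_le: "Re (z j) \<le> c" if "j \<in> A" for j
    using bound[OF that] complex_Re_le_cmod[of "z j"] by linarith
  have "(\<Sum>j\<in>A. c - Re (z j)) = 0"
    using arg_cong[OF sum, of Re] by (simp add: Re_sum sum_subtractf)
  then have Re: "Re (z i) = c"
    using sum_nonneg_eq_0_iff[OF A, of "\<lambda>j. c - Re (z j)"] Re_le i by simp
  then have "(cmod (z i))\<^sup>2 = (Re (z i))\<^sup>2"
    using bound[OF i] complex_Re_le_cmod[of "z i"] by simp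
  then have "Im (z i) = 0" by (simp add: cmod_power2)
  with Re show "z i = of_real c" by (simp add: complex_eq_iff)
qed

lemma r1_ge:
  assumes dp: "dual_pair n N F G" and n: "0 < n" and N: "0 < N"
  shows "real n / real N \<le> r1 n N F G"
proof -
  let ?M = "Max ((\<lambda>i. cmod (F i \<bullet>c G i)) ` {1..N})"
  have "real n = cmod (\<Sum>i\<in>{1..N}. F i \<bullet>c G i)"
    using dual_pair_trace[OF dp] by simp
  also have "\<dots> \<le> (\<Sum>i\<in>{1..N}. cmod (F i \<bullet>c G i))" by (rule norm_sum)
  also have "\<dots> \<le> (\<Sum>i\<in>{1..N}. ?M)" by (intro sum_mono Max_ge) auto
  also have "\<dots> = real N * ?M" by simp
  finally show ?thesis
    using r1_eq_Max_cmod[OF dp n] N by (simp add: field_simps)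
qed

lemma r1_eq_iff_diag_eq:
  assumes dp: "dual_pair n N F G" and n: "0 < n" and N: "0 < N"
  shows "r1 n N F G = real n / real N \<longleftrightarrow>
    (\<forall>i\<in>{1..N}. F i \<bullet>c G i = complex_of_real (real n / real N))"
proof
  assume r: "r1 n N F G = real n / real N"
  show "\<forall>i\<in>{1..N}. F i \<bullet>c G i = complex_of_real (real n / real N)"
  proof (rule sum_eq_card_mult_bound_imp_eq)
    fix i assume "i \<in> {1..N}"
    then have "cmod (F i \<bullet>c G i) \<le> Max ((\<lambda>i. cmod (F i \<bullet>c G i)) ` {1..N})"
      by (intro Max_ge) simp_all
    then show "cmod (F i \<bullet>c G i) \<le> real n / real N"
      using r r1_eq_Max_cmod[OF dp n] by simp
  next
    have "real (card {1..N}) * (real n / real N) = real n" using N by simp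
    then show "(\<Sum>i\<in>{1..N}. F i \<bullet>c G i) = complex_of_real (real (card {1..N}) * (real n / real N))"
      using dual_pair_trace[OF dp] by simp
  qed simp
next
  assume diag: "\<forall>i\<in>{1..N}. F i \<bullet>c G i = complex_of_real (real n / real N)"
  have "(\<lambda>i. cmod (F i \<bullet>c G i)) ` {1..N} = (\<lambda>i. real n / real N) ` {1..N}"
    using diag by (intro image_cong) (simp_all add: norm_divide)
  also have "\<dots> = {real n / real N}" using N by (simp add: image_constant_conv)
  finally show "r1 n N F G = real n / real N"
    using r1_eq_Max_cmod[OF dp n] by simp
qed

lemma uniform1_iff_diag_eq:
  assumes dual: "is_dual n N F G" and N: "0 < N"
  shows "uniform1 N F G \<longleftrightarrow> (\<forall>i\<in>{1..N}. F i \<bullet>c G i = complex_of_real (real n / real N))"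
proof
  assume uni: "uniform1 N F G"
  have "1 \<in> {1..N}" using N by simp
  then have const: "F i \<bullet>c G i = F 1 \<bullet>c G 1" if "i \<in> {1..N}" for i
    using uni that unfolding uniform1_def by blast
  have "of_nat n = (\<Sum>i\<in>{1..N}. F i \<bullet>c G i)"
    using is_dual_trace[OF dual] by simp
  also have "\<dots> = (\<Sum>i\<in>{1..N}. F 1 \<bullet>c G 1)"
    by (rule sum.cong[OF refl const])
  also have "\<dots> = of_nat N * (F 1 \<bullet>c G 1)"
    by simp
  finally have "F 1 \<bullet>c G 1 = complex_of_real (real n / real N)"
    using N by (simp add: nonzero_eq_divide_eq mult.commute)
  then show "\<forall>i\<in>{1..N}. F i \<bullet>c G i = complex_of_real (real n / real N)"
    using const by metis
next
  assume "\<forall>i\<in>{1..N}. F i \<bullet>c G i = complex_of_real (real n / real N)"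
  then show "uniform1 N F G" unfolding uniform1_def by simp
qed

lemma frame_sum_eq_of_reconstruction:
  assumes F: "\<And>i. i \<in> {1..N} \<Longrightarrow> F i \<in> carrier_vec n"
    and rec: "\<And>j. j < n \<Longrightarrow> (\<Sum>i\<in>{1..N}. (f \<bullet>c F i) * F i $ j) = of_real A * f $ j"
  shows "(\<Sum>i\<in>{1..N}. (cmod (f \<bullet>c F i))\<^sup>2) = A * hnorm_sq n f"
proof -
  have "complex_of_real (\<Sum>i\<in>{1..N}. (cmod (f \<bullet>c F i))\<^sup>2)
      = (\<Sum>i\<in>{1..N}. (f \<bullet>c F i) * cnj (f \<bullet>c F i))"
    unfolding of_real_sum complex_norm_square ..
  also have "\<dots> = (\<Sum>i\<in>{1..N}. \<Sum>j<n. (f \<bullet>c F i) * F i $ j * cnj (f $ j))"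
  proof (rule sum.cong[OF refl])
    fix i assume "i \<in> {1..N}"
    then show "(f \<bullet>c F i) * cnj (f \<bullet>c F i) = (\<Sum>j<n. (f \<bullet>c F i) * F i $ j * cnj (f $ j))"
      by (simp add: cscalar_prod_eq_sum[OF F] sum_distrib_left mult_ac)
  qed
  also have "\<dots> = (\<Sum>j<n. (\<Sum>i\<in>{1..N}. (f \<bullet>c F i) * F i $ j) * cnj (f $ j))"
    by (subst sum.swap) (simp add: sum_distrib_right)
  also have "\<dots> = complex_of_real (A * hnorm_sq n f)"
    by (simp add: rec hnorm_sq_eq_sum sum_distrib_left mult.assoc)
  finally show ?thesis by (simp only: of_real_eq_iff)
qed

lemma tight_frame_is_frame:
  assumes "\<And>i. i \<in> {1..N} \<Longrightarrow> F i \<in> carrier_vec n" and "0 < A"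
    and "\<And>f. f \<in> carrier_vec n \<Longrightarrow> (\<Sum>i\<in>{1..N}. (cmod (f \<bullet>c F i))\<^sup>2) = A * hnorm_sq n f"
  shows "is_frame n N F"
  unfolding is_frame_def using assms by (intro conjI ballI exI[of _ A]) auto

lemma dual_pair_of_reconstruction:
  assumes F: "\<And>i. i \<in> {1..N} \<Longrightarrow> F i \<in> carrier_vec n" and A: "0 < A"
    and rec: "\<And>f j. f \<in> carrier_vec n \<Longrightarrow> j < n \<Longrightarrow>
      (\<Sum>i\<in>{1..N}. (f \<bullet>c F i) * F i $ j) = of_real A * f $ j"
  shows "dual_pair n N F (\<lambda>i. complex_of_real (1 / A) \<cdot>\<^sub>v F i)"
proof -
  let ?G = "\<lambda>i. complex_of_real (1 / A) \<cdot>\<^sub>v F i"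
  have G_prod: "f \<bullet>c ?G i = complex_of_real (1 / A) * (f \<bullet>c F i)" if "i \<in> {1..N}" for f i
    using F[OF that] by (simp add: cscalar_prod_smult_right)
  have F_sum: "(\<Sum>i\<in>{1..N}. (cmod (f \<bullet>c F i))\<^sup>2) = A * hnorm_sq n f"
    if "f \<in> carrier_vec n" for f
    using frame_sum_eq_of_reconstruction[OF F rec[OF that]] .
  have "is_frame n N F"
    using F A F_sum by (rule tight_frame_is_frame)
  moreover have "is_frame n N ?G"
  proof (rule tight_frame_is_frame)
    fix f :: "complex vec" assume f: "f \<in> carrier_vec n"
    have "(\<Sum>i\<in>{1..N}. (cmod (f \<bullet>c ?G i))\<^sup>2) = (\<Sum>i\<in>{1..N}. (cmod (f \<bullet>c F i))\<^sup>2 / A\<^sup>2)"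
    proof (rule sum.cong[OF refl])
      fix i assume "i \<in> {1..N}"
      then show "(cmod (f \<bullet>c ?G i))\<^sup>2 = (cmod (f \<bullet>c F i))\<^sup>2 / A\<^sup>2"
        using G_prod A by (simp add: norm_divide power_divide)
    qed
    also have "\<dots> = (\<Sum>i\<in>{1..N}. (cmod (f \<bullet>c F i))\<^sup>2) / A\<^sup>2"
      by (rule sum_divide_distrib[symmetric])
    also have "\<dots> = 1 / A * hnorm_sq n f"
      unfolding F_sum[OF f] using A by (simp add: power2_eq_square)
    finally show "(\<Sum>i\<in>{1..N}. (cmod (f \<bullet>c ?G i))\<^sup>2) = 1 / A * hnorm_sq n f" .
  qed (use F A in auto)
  moreover have "is_dual n N F ?G"
    unfolding is_dual_def
  proof (intro conjI ballI allI impI)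
    fix f :: "complex vec" and j assume f: "f \<in> carrier_vec n" and j: "j < n"
    have "(\<Sum>i\<in>{1..N}. (f \<bullet>c ?G i) * F i $ j)
        = (\<Sum>i\<in>{1..N}. complex_of_real (1 / A) * ((f \<bullet>c F i) * F i $ j))"
    proof (rule sum.cong[OF refl])
      fix i assume "i \<in> {1..N}"
      then show "(f \<bullet>c ?G i) * F i $ j = complex_of_real (1 / A) * ((f \<bullet>c F i) * F i $ j)"
        unfolding G_prod[OF \<open>i \<in> {1..N}\<close>] by (simp only: mult.assoc)
    qed
    also have "\<dots> = complex_of_real (1 / A) * (of_real A * f $ j)"
      unfolding sum_distrib_left[symmetric] rec[OF f j] ..
    also have "\<dots> = f $ j" using A by simp
    finally show "f $ j = (\<Sum>i\<in>{1..N}. (f \<bullet>c ?G i) * F i $ j)" ..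
  qed (use F in auto)
  ultimately show ?thesis unfolding dual_pair_def by blast
qed

lemma sum_power_root_of_unity:
  fixes z :: complex
  assumes "z ^ N = 1" "z \<noteq> 1"
  shows "(\<Sum>i\<in>{1..N}. z ^ i) = 0"
proof -
  have "(\<Sum>i\<in>{1..N}. z ^ i) = z * (\<Sum>i<N. z ^ i)"
    by (simp add: sum.atLeast1_atMost_eq sum_distrib_left)
  then show ?thesis using assms by (simp add: geometric_sum)
qed

lemma roots_of_unity_orthogonal:
  assumes j: "j < N" and k: "k < N"
  shows "(\<Sum>i\<in>{1..N}. cis (2 * pi * real j / real N) ^ i * cnj (cis (2 * pi * real k / real N)) ^ i)
    = (if j = k then of_nat N else 0)"
proof -
  let ?\<omega> = "\<lambda>m. cis (2 * pi * real m / real N)"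
  define z where "z = ?\<omega> j * cnj (?\<omega> k)"
  have N: "0 < N" using j by simp
  have root: "?\<omega> m ^ N = 1" for m
  proof -
    have "?\<omega> m ^ N = cis (2 * pi * real m)"
      using N by (simp add: DeMoivre)
    then show ?thesis by simp
  qed
  have cnj_inverse: "cnj (?\<omega> m) * ?\<omega> m = 1" for m
    by (simp add: cis_cnj cis_mult)
  have "(\<Sum>i\<in>{1..N}. ?\<omega> j ^ i * cnj (?\<omega> k) ^ i) = (\<Sum>i\<in>{1..N}. z ^ i)"
    by (simp add: z_def power_mult_distrib)
  also have "\<dots> = (if j = k then of_nat N else 0)"
  proof (cases "j = k")
    case True
    then show ?thesis using cnj_inverse by (simp add: z_def mult.commute)
  next
    case False
    have zN: "z ^ N = 1" using root by (simp add: z_def power_mult_distrib flip: complex_cnj_power)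
    have z1: "z \<noteq> 1"
    proof
      assume "z = 1"
      then have "?\<omega> j = ?\<omega> k"
        using cnj_inverse[of k] by (metis z_def mult.assoc mult_1_left mult_1_right)
      then show False
        using False j k inj_onD[OF bij_betw_imp_inj_on[OF bij_betw_roots_unity[OF N]]] by auto
    qed
    show ?thesis using False sum_power_root_of_unity[OF zN z1] by simp
  qed
  finally show ?thesis .
qed

definition harmonic_frame :: "nat \<Rightarrow> nat \<Rightarrow> nat \<Rightarrow> complex vec" where
  "harmonic_frame n N i = vec n (\<lambda>j. cis (2 * pi * real j / real N) ^ i)"

lemma harmonic_frame_carrier [simp]: "harmonic_frame n N i \<in> carrier_vec n"
  by (simp add: harmonic_frame_def)

lemma harmonic_frame_reconstruction:
  assumes nN: "n \<le> N" and f: "f \<in> carrier_vec n" and j: "j < n"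
  shows "(\<Sum>i\<in>{1..N}. (f \<bullet>c harmonic_frame n N i) * harmonic_frame n N i $ j) = of_nat N * f $ j"
proof -
  let ?\<omega> = "\<lambda>m. cis (2 * pi * real m / real N)"
  have "(\<Sum>i\<in>{1..N}. (f \<bullet>c harmonic_frame n N i) * harmonic_frame n N i $ j)
      = (\<Sum>i\<in>{1..N}. \<Sum>k<n. f $ k * (?\<omega> j ^ i * cnj (?\<omega> k) ^ i))"
    using j by (simp add: cscalar_prod_eq_sum harmonic_frame_def sum_distrib_left mult_ac)
  also have "\<dots> = (\<Sum>k<n. f $ k * (\<Sum>i\<in>{1..N}. ?\<omega> j ^ i * cnj (?\<omega> k) ^ i))"
    by (subst sum.swap) (simp add: sum_distrib_left)
  also have "\<dots> = (\<Sum>k<n. f $ k * (if j = k then of_nat N else 0))"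
    using nN j by (intro sum.cong refl) (subst roots_of_unity_orthogonal, auto)
  also have "\<dots> = of_nat N * f $ j"
    using j by (simp add: if_distrib sum.delta mult.commute cong: if_cong)
  finally show ?thesis .
qed

lemma harmonic_frame_cscalar_prod_self: "harmonic_frame n N i \<bullet>c harmonic_frame n N i = of_nat n"
proof -
  have "cis a ^ i * cnj (cis a) ^ i = 1" for a
    by (simp add: cis_cnj DeMoivre cis_mult)
  then show ?thesis by (simp add: cscalar_prod_eq_sum harmonic_frame_def)
qed

lemma harmonic_dual_pair:
  assumes "0 < N" "n \<le> N"
  shows "dual_pair n N (harmonic_frame n N)
    (\<lambda>i. complex_of_real (1 / real N) \<cdot>\<^sub>v harmonic_frame n N i)"
  using assms harmonic_frame_reconstruction[OF assms(2)]
  by (intro dual_pair_of_reconstruction) auto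

lemma exists_dual_pair_diag_eq:
  assumes N: "0 < N" and nN: "n \<le> N"
  shows "\<exists>F G. dual_pair n N F G \<and> (\<forall>i\<in>{1..N}. F i \<bullet>c G i = complex_of_real (real n / real N))"
proof (intro exI conjI ballI)
  show "dual_pair n N (harmonic_frame n N) (\<lambda>i. complex_of_real (1 / real N) \<cdot>\<^sub>v harmonic_frame n N i)"
    using harmonic_dual_pair[OF assms] .
  show "harmonic_frame n N i \<bullet>c (complex_of_real (1 / real N) \<cdot>\<^sub>v harmonic_frame n N i)
      = complex_of_real (real n / real N)" for i
    by (simp add: cscalar_prod_smult_right[OF harmonic_frame_carrier] harmonic_frame_cscalar_prod_self)
qed

theorem theorem4p2:
  fixes n N :: nat
  assumes "1 \<le> n" and "n \<le> N"
  shows "r1_opt n N = real n / real N \<and>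
    (\<forall>F G. dual_pair n N F G \<longrightarrow>
       (((F, G) \<in> R1 n N \<longleftrightarrow> uniform1 N F G) \<and>
        (uniform1 N F G \<longleftrightarrow> (\<forall>i\<in>{1..N}. F i \<bullet>c G i = complex_of_real (real n / real N)))))"
proof -
  have n: "0 < n" and N: "0 < N" using assms by simp_all
  obtain F\<^sub>0 G\<^sub>0 where dp\<^sub>0: "dual_pair n N F\<^sub>0 G\<^sub>0" and "r1 n N F\<^sub>0 G\<^sub>0 = real n / real N"
    using exists_dual_pair_diag_eq[OF N assms(2)] r1_eq_iff_diag_eq[OF _ n N] by blast
  then have "real n / real N \<in> {r1 n N F G | F G. dual_pair n N F G}" by force
  then have opt: "r1_opt n N = real n / real N"
    unfolding r1_opt_def using r1_ge[OF _ n N] by (intro cInf_eq_minimum) blast+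
  show ?thesis
  proof (intro conjI allI impI)
    fix F G assume dp: "dual_pair n N F G"
    then have "is_dual n N F G" unfolding dual_pair_def by blast
    then show uni: "uniform1 N F G \<longleftrightarrow> (\<forall>i\<in>{1..N}. F i \<bullet>c G i = complex_of_real (real n / real N))"
      by (rule uniform1_iff_diag_eq[OF _ N])
    show "(F, G) \<in> R1 n N \<longleftrightarrow> uniform1 N F G"
      unfolding R1_def opt uni r1_eq_iff_diag_eq[OF dp n N, symmetric] using dp by simp
  qed (rule opt)
qed

end
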